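(* Let $G$ be a finite free graph with $n$ vertices. Then $\phi(G)\ge \frac{n}{\bar{\alpha}(G)}\ge \frac{n}{n-d(G)}$.
   Context: An independent set of $G$ is a free independent set if it is contained in at least two distinct maximal independent sets of $G$. $G$ is free if every vertex lies in some free independent set. The free chromatic number $\phi(G)$ is the minimum positive integer $t$ such that $V(G)$ can be partitioned into $t$ free independent sets. $\bar{\alpha}(G)$ denotes the maximum size of a free independent set of $G$. For an edge $e=uv$, $d(e)=|N(u)\cup N(v)|$ (the number of vertices lying in the neighborhood of $u$ or of $v$), and $d(G)=\min\{d(e): e\in E(G)\}$. *)

theory Defs
  imports Complex_Main
begin

definition simple_graph :: "'a set \<Rightarrow> ('a \<Rightarrow> 'a \<Rightarrow> bool) \<Rightarrow> bool" where
  "simple_graph V E \<longleftrightarrow> finite V \<and> (\<forall>u v. E u v \<longrightarrow> u \<in> V \<and> v \<in> V)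
     \<and> (\<forall>u v. E u v \<longrightarrow> E v u) \<and> (\<forall>u. \<not> E u u)"

definition independent :: "'a set \<Rightarrow> ('a \<Rightarrow> 'a \<Rightarrow> bool) \<Rightarrow> 'a set \<Rightarrow> bool" where
  "independent V E S \<longleftrightarrow> S \<subseteq> V \<and> (\<forall>x\<in>S. \<forall>y\<in>S. \<not> E x y)"

definition maximal_independent :: "'a set \<Rightarrow> ('a \<Rightarrow> 'a \<Rightarrow> bool) \<Rightarrow> 'a set \<Rightarrow> bool" where
  "maximal_independent V E S \<longleftrightarrow> independent V E S \<and>
     (\<forall>T. independent V E T \<and> S \<subseteq> T \<longrightarrow> T = S)"

definition free_independent :: "'a set \<Rightarrow> ('a \<Rightarrow> 'a \<Rightarrow> bool) \<Rightarrow> 'a set \<Rightarrow> bool" where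
  "free_independent V E S \<longleftrightarrow> independent V E S \<and>
     (\<exists>A B. maximal_independent V E A \<and> maximal_independent V E B \<and> A \<noteq> B \<and> S \<subseteq> A \<and> S \<subseteq> B)"

definition free_graph :: "'a set \<Rightarrow> ('a \<Rightarrow> 'a \<Rightarrow> bool) \<Rightarrow> bool" where
  "free_graph V E \<longleftrightarrow> (\<forall>v\<in>V. \<exists>S. free_independent V E S \<and> v \<in> S)"

definition free_partition :: "'a set \<Rightarrow> ('a \<Rightarrow> 'a \<Rightarrow> bool) \<Rightarrow> 'a set set \<Rightarrow> bool" where
  "free_partition V E P \<longleftrightarrow> \<Union>P = V \<and> (\<forall>S\<in>P. S \<noteq> {} \<and> free_independent V E S)
     \<and> (\<forall>S\<in>P. \<forall>T\<in>P. S \<noteq> T \<longrightarrow> S \<inter> T = {})"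

definition free_chromatic_number :: "'a set \<Rightarrow> ('a \<Rightarrow> 'a \<Rightarrow> bool) \<Rightarrow> nat" where
  "free_chromatic_number V E =
     (LEAST t. t > 0 \<and> (\<exists>P. finite P \<and> card P = t \<and> free_partition V E P))"

definition alpha_bar :: "'a set \<Rightarrow> ('a \<Rightarrow> 'a \<Rightarrow> bool) \<Rightarrow> nat" where
  "alpha_bar V E = Max {card S | S. free_independent V E S}"

definition nbhd :: "'a set \<Rightarrow> ('a \<Rightarrow> 'a \<Rightarrow> bool) \<Rightarrow> 'a \<Rightarrow> 'a set" where
  "nbhd V E u = {w \<in> V. E u w}"

definition edge_degree :: "'a set \<Rightarrow> ('a \<Rightarrow> 'a \<Rightarrow> bool) \<Rightarrow> 'a \<Rightarrow> 'a \<Rightarrow> nat" where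
  "edge_degree V E u v = card (nbhd V E u \<union> nbhd V E v)"

definition min_edge_degree :: "'a set \<Rightarrow> ('a \<Rightarrow> 'a \<Rightarrow> bool) \<Rightarrow> nat" where
  "min_edge_degree V E = Min {edge_degree V E u v | u v. u \<in> V \<and> v \<in> V \<and> E u v}"

end

theory Submission
  imports Defs
begin

text \<open>A free independent set S lies in two distinct maximal independent sets A and B. Some
  a \<in> A - B has a neighbour b \<in> B by maximality of B, and S avoids the neighbourhoods of both a
  and b; hence card S \<le> n - d(a b) \<le> n - d(G), so \<open>\<bar>\<alpha>\<close>(G) \<le> n - d(G). Since subsets of free
  independent sets are free independent, a free graph has the partition into singletons, and any
  partition into \<open>\<phi>\<close>(G) free independent sets gives n \<le> \<open>\<phi>\<close>(G) \<cdot> \<open>\<bar>\<alpha>\<close>(G).\<close>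

lemma independent_subset:
  "independent V E S \<Longrightarrow> T \<subseteq> S \<Longrightarrow> independent V E T"
  unfolding independent_def by blast

lemma free_independent_subset:
  "free_independent V E S \<Longrightarrow> T \<subseteq> S \<Longrightarrow> free_independent V E T"
  unfolding free_independent_def using independent_subset by blast

lemma free_graph_singleton:
  assumes "free_graph V E" "v \<in> V"
  shows "free_independent V E {v}"
  using assms free_independent_subset unfolding free_graph_def by blast

lemma maximal_independent_dominating:
  assumes "simple_graph V E" "maximal_independent V E B" "a \<in> V" "a \<notin> B"
  shows "\<exists>b\<in>B. E a b"
proof (rule ccontr)
  assume no_nb: "\<not> (\<exists>b\<in>B. E a b)"
  have "B \<subseteq> V" "\<forall>x\<in>B. \<forall>y\<in>B. \<not> E x y" "\<forall>x y. E x y \<longrightarrow> E y x" "\<not> E a a"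
    using assms(1,2) unfolding maximal_independent_def independent_def simple_graph_def by auto
  with no_nb assms(3) have "independent V E (insert a B)"
    unfolding independent_def by blast
  with assms(2) have "insert a B = B"
    unfolding maximal_independent_def by blast
  with assms(4) show False by blast
qed

lemma free_independent_avoids_edge:
  assumes "simple_graph V E" "free_independent V E S"
  obtains a b where "a \<in> V" "b \<in> V" "E a b" "S \<inter> (nbhd V E a \<union> nbhd V E b) = {}"
proof -
  obtain A B where A: "maximal_independent V E A" and B: "maximal_independent V E B"
    and "A \<noteq> B" "S \<subseteq> A" "S \<subseteq> B"
    using assms(2) unfolding free_independent_def by blast
  then have "\<not> A \<subseteq> B"
    unfolding maximal_independent_def by blast
  then obtain a where "a \<in> A" "a \<notin> B" by blast
  moreover have "a \<in> V"
    using A \<open>a \<in> A\<close> unfolding maximal_independent_def independent_def by blast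
  ultimately obtain b where "b \<in> B" "E a b"
    using maximal_independent_dominating[OF assms(1) B] by blast
  moreover have "b \<in> V"
    using B \<open>b \<in> B\<close> unfolding maximal_independent_def independent_def by blast
  moreover have "S \<inter> (nbhd V E a \<union> nbhd V E b) = {}"
  proof -
    have "\<forall>x\<in>A. \<forall>y\<in>A. \<not> E x y" "\<forall>x\<in>B. \<forall>y\<in>B. \<not> E x y"
      using A B unfolding maximal_independent_def independent_def by auto
    then show ?thesis
      using \<open>a \<in> A\<close> \<open>b \<in> B\<close> \<open>S \<subseteq> A\<close> \<open>S \<subseteq> B\<close> unfolding nbhd_def by blast
  qed
  ultimately show thesis using that \<open>a \<in> V\<close> by blast
qed

lemma edge_degree_le_card:
  "finite V \<Longrightarrow> edge_degree V E u v \<le> card V"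
  unfolding edge_degree_def nbhd_def by (rule card_mono) auto

lemma min_edge_degree_le:
  assumes "finite V" "u \<in> V" "v \<in> V" "E u v"
  shows "min_edge_degree V E \<le> edge_degree V E u v"
proof -
  have "{edge_degree V E u v | u v. u \<in> V \<and> v \<in> V \<and> E u v} \<subseteq> {..card V}"
    using edge_degree_le_card[OF assms(1)] by auto
  then show ?thesis
    unfolding min_edge_degree_def using assms
    by (intro Min_le) (auto intro: finite_subset)
qed

lemma card_free_independent_le:
  assumes "simple_graph V E" "free_independent V E S"
  shows "card S \<le> card V - min_edge_degree V E"
proof -
  have fin: "finite V" using assms(1) by (simp add: simple_graph_def)
  obtain a b where ab: "a \<in> V" "b \<in> V" "E a b"
    and disj: "S \<inter> (nbhd V E a \<union> nbhd V E b) = {}"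
    using free_independent_avoids_edge[OF assms] .
  have sub: "S \<union> (nbhd V E a \<union> nbhd V E b) \<subseteq> V"
    using assms(2) unfolding free_independent_def independent_def nbhd_def by blast
  then have "card S + edge_degree V E a b \<le> card V"
    unfolding edge_degree_def
    using card_Un_disjoint[OF _ _ disj] card_mono[OF fin sub] fin
    by (metis finite_Un finite_subset)
  moreover have "min_edge_degree V E \<le> edge_degree V E a b"
    using fin ab by (rule min_edge_degree_le)
  ultimately show ?thesis by linarith
qed

lemma finite_card_free_independent:
  assumes "finite V"
  shows "finite {card S | S. free_independent V E S}"
proof -
  have "{card S | S. free_independent V E S} \<subseteq> {..card V}"
    using card_mono[OF assms]
    unfolding free_independent_def independent_def by auto
  then show ?thesis by (rule finite_subset) simp
qed

lemma card_le_alpha_bar: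
  "finite V \<Longrightarrow> free_independent V E S \<Longrightarrow> card S \<le> alpha_bar V E"
  unfolding alpha_bar_def using finite_card_free_independent by (intro Max_ge) auto

lemma alpha_bar_attained:
  assumes "finite V" "free_independent V E S"
  obtains S' where "free_independent V E S'" "card S' = alpha_bar V E"
proof -
  have "alpha_bar V E \<in> {card S | S. free_independent V E S}"
    unfolding alpha_bar_def using finite_card_free_independent[OF assms(1)] assms(2)
    by (intro Max_in) auto
  then show thesis using that by auto
qed

lemma alpha_bar_le:
  assumes "simple_graph V E" "free_independent V E S"
  shows "alpha_bar V E \<le> card V - min_edge_degree V E"
proof -
  have "finite V" using assms(1) by (simp add: simple_graph_def)
  then show ?thesis
    using alpha_bar_attained assms card_free_independent_le by metis
qed

lemma alpha_bar_pos:
  assumes "finite V" "free_graph V E" "V \<noteq> {}"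
  shows "alpha_bar V E > 0"
proof -
  obtain v where "v \<in> V" using assms(3) by blast
  then show ?thesis
    using card_le_alpha_bar[OF assms(1) free_graph_singleton[OF assms(2)]] by fastforce
qed

lemma card_le_partition_alpha_bar:
  assumes "finite V" "finite P" "free_partition V E P"
  shows "card V \<le> card P * alpha_bar V E"
proof -
  have "card V = card (\<Union>P)" using assms(3) unfolding free_partition_def by simp
  also have "\<dots> = (\<Sum>S\<in>P. card S)"
  proof (rule card_Union_disjoint)
    show "pairwise disjnt P"
      using assms(3) unfolding free_partition_def pairwise_def disjnt_def by blast
    show "finite S" if "S \<in> P" for S
      using assms(1,3) that unfolding free_partition_def by (metis Union_upper finite_subset)
  qed
  also have "\<dots> \<le> (\<Sum>S\<in>P. alpha_bar V E)"
    using assms card_le_alpha_bar unfolding free_partition_def by (intro sum_mono) auto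
  finally show ?thesis by simp
qed

lemma free_chromatic_number_partition:
  assumes "finite V" "free_graph V E" "V \<noteq> {}"
  obtains P where "finite P" "card P = free_chromatic_number V E" "free_partition V E P"
proof -
  let ?P = "(\<lambda>v. {v}) ` V"
  have "free_partition V E ?P"
    unfolding free_partition_def using free_graph_singleton[OF assms(2)] by auto
  moreover have "card ?P = card V" "finite ?P"
    using assms(1) by (simp_all add: card_image)
  moreover have "card V > 0" using assms(1,3) by (simp add: card_gt_0_iff)
  ultimately have "\<exists>t. t > 0 \<and> (\<exists>P. finite P \<and> card P = t \<and> free_partition V E P)" by blast
  then have "\<exists>P. finite P \<and> card P = free_chromatic_number V E \<and> free_partition V E P"
    unfolding free_chromatic_number_def by (rule LeastI2_ex) blast
  then show thesis using that by blast
qed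

theorem mainTheorem3:
  fixes V :: "'a set" and E :: "'a \<Rightarrow> 'a \<Rightarrow> bool" and n :: nat
  assumes "simple_graph V E" and "V \<noteq> {}" and "card V = n" and "free_graph V E"
  shows "real (free_chromatic_number V E) \<ge> real n / real (alpha_bar V E)
    \<and> real n / real (alpha_bar V E) \<ge> real n / (real n - real (min_edge_degree V E))"
proof -
  have fin: "finite V" using assms(1) by (simp add: simple_graph_def)
  have pos: "alpha_bar V E > 0" using alpha_bar_pos[OF fin assms(4,2)] .
  obtain P where "finite P" "card P = free_chromatic_number V E" "free_partition V E P"
    using free_chromatic_number_partition[OF fin assms(4,2)] .
  then have "n \<le> free_chromatic_number V E * alpha_bar V E"
    using card_le_partition_alpha_bar[OF fin] assms(3) by metis
  then have "real n \<le> real (free_chromatic_number V E) * real (alpha_bar V E)"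
    by (metis of_nat_le_iff of_nat_mult)
  then have chi: "real n / real (alpha_bar V E) \<le> real (free_chromatic_number V E)"
    using pos by (simp add: divide_le_eq)
  obtain v where "v \<in> V" using assms(2) by blast
  then have "alpha_bar V E \<le> n - min_edge_degree V E"
    using alpha_bar_le[OF assms(1) free_graph_singleton[OF assms(4)]] assms(3) by simp
  then have "real (alpha_bar V E) \<le> real n - real (min_edge_degree V E)"
    using pos by linarith
  then have "real n / (real n - real (min_edge_degree V E)) \<le> real n / real (alpha_bar V E)"
    using pos by (intro divide_left_mono) auto
  with chi show ?thesis by simp
qed

end
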